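(* Let $v\in\mathrm{Box}(\Sigma_+)$, $t\in\mathcal I(y^v)$, and let $l\in\mathbb L$ be such that $p(l)\in p(\mathcal S^{es}_+(\gamma^v))=p(\mathcal S^{es}_-(\gamma^v(t)))$, where $p:\mathbb L\to\mathbb L/\langle h\rangle$ is the projection. Then for $m\in\mathbb Z$: $mh+l\in\mathcal S^{es}_+(\gamma^v)$ if and only if $m\ge m_+(l)$, and $mh+l\in\mathcal S^{es}_-(\gamma^v(t))$ if and only if $m\le m_{-,t}(l)$.
   Context: $N\cong\mathbb Z^d$ lattice, $\mathcal A=\{v_1,\dots,v_n\}\subset N$ generating $N$ with a homomorphism $\mathrm h:N\to\mathbb Z$, $\mathrm h(v_j)=1$; $\mathbb L=\{l\in\mathbb Z^n:\sum l_jv_j=0\}$; fix $\beta\in N$. $\Sigma_\pm$ are the fans supported on $\mathbb R_{\ge0}\mathrm{Conv}(\mathcal A)$ of two regular triangulations with vertices in $\mathcal A$ joined by an edge of the secondary polytope; there is a circuit $I$ with primitive relation $h\in\mathbb L$, $I_\pm=\{v_j:\pm h_j>0\}$, such that (with $\mathcal F\subset\mathcal A\setminus I$ separating if $\mathcal F\cup(I\setminus\{v\})$ generates a maximal cone of $\Sigma_\pm$ for all $v\in I_\pm$) $\Sigma_-$ arises from $\Sigma_+$ by replacing the maximal cones $\mathcal F\cup(I\setminus\{v\})$, $v\in I_+$, by $\mathcal F\cup(I\setminus\{v\})$, $v\in I_-$; these are the essential maximal cones of $\Sigma_\pm$. $\mathrm{Box}(\Sigma_+)$: $v=\sum q^v_jv_j\in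 N$, $0\le q^v_j<1$, $q^v_j=0$ unless $v_j$ spans a ray of a fixed maximal cone of $\Sigma_+$; $y^v_j=e^{2\pi iq^v_j}$. $\mathcal I(r)=\{t\in\mathbb C^*:r_jt^{h_j}=1$ for some $v_j\in I_-\}$. Choose $\gamma^v\in\mathbb Q^n$ with $e^{2\pi i\gamma^v_j}=y^v_j$, $\sum\gamma^v_jv_j=\beta$; for $t\in\mathcal I(y^v)$ fix $\theta_t\in\mathbb Q$ with $e^{2\pi i\theta_t}=t$ ($\theta_1=0$) and set $\gamma^v(t)=\gamma^v+\theta_th$. For $\gamma\in\mathbb Q^n$, $l\in\mathbb L$: $\mathrm{Supp}(l)=\{v_j:l_j+\gamma_j\notin\mathbb Z_{\ge0}\}$; $\mathcal S^{es}_\pm(\gamma)$ is the set of $l\in\mathbb L$ such that all elements of $\mathrm{Supp}(l)$ generate rays of one essential maximal cone of $\Sigma_\pm$. Define $m_+(l)=\min\{m\in\mathbb Z:mh_j+l_j+\gamma^v_j\in\mathbb Z_{\ge0}$ for some $j$ with $v_j\in I_+\}$ and $m_{-,t}(l)=\max\{m\in\mathbb Z:mh_j+l_j+\gamma^v_j(t)\in\mathbb Z_{\ge0}$ for some $j$ with $v_j\in I_-\}$ (these are well defined integers). *)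

theory Defs
  imports "HOL-Analysis.Analysis"
begin

text \<open>The point configuration A = {v_0,...,v_(n-1)} in N = Z^d is given by
  v :: nat => int^'d (indices j < n).  Elements of Z^n are functions nat => int
  vanishing outside {..<n}.\<close>

definition vr :: "(nat \<Rightarrow> int^'d) \<Rightarrow> nat \<Rightarrow> real^'d" where
  "vr v j = (\<chi> k. real_of_int (v j $ k))"

definition lattice_L :: "nat \<Rightarrow> (nat \<Rightarrow> int^'d) \<Rightarrow> (nat \<Rightarrow> int) set" where
  "lattice_L n v = {l. (\<forall>j\<ge>n. l j = 0) \<and> (\<forall>k. (\<Sum>j<n. l j * v j $ k) = 0)}"

text \<open>Regular triangulation with vertices in A, given by its maximal simplices
  (index sets); the maximal cones of the associated fan are the cones over them.
  A height function omega lifts the points; maximal lower faces of the lifted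
  configuration are the sets of points where a linear functional psi (an affine
  function on the hyperplane h = 1) touches the lift from below, and span
  dimension d; the triangulation condition is that all of them are simplices.\<close>
definition regular_triangulation :: "nat \<Rightarrow> (nat \<Rightarrow> int^'d) \<Rightarrow> nat set set \<Rightarrow> bool" where
  "regular_triangulation n v T \<longleftrightarrow>
     (\<exists>\<omega>::nat \<Rightarrow> real.
        T = {\<sigma>. \<exists>\<psi>::real^'d. (\<forall>j<n. \<psi> \<bullet> vr v j \<le> \<omega> j)
                  \<and> \<sigma> = {j. j < n \<and> \<psi> \<bullet> vr v j = \<omega> j}
                  \<and> dim (vr v ` \<sigma>) = CARD('d)})
     \<and> (\<forall>\<sigma>\<in>T. independent (vr v ` \<sigma>) \<and> inj_on (vr v) \<sigma>)"

text \<open>Circuit: minimal (affinely = linearly, since h(v_j)=1) dependent subset.\<close>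
definition circuit :: "nat \<Rightarrow> (nat \<Rightarrow> int^'d) \<Rightarrow> nat set \<Rightarrow> bool" where
  "circuit n v I \<longleftrightarrow> I \<subseteq> {..<n} \<and> dependent (vr v ` I) \<and>
     (\<forall>J. J \<subset> I \<longrightarrow> independent (vr v ` J))"

definition primitive_relation :: "nat \<Rightarrow> (nat \<Rightarrow> int^'d) \<Rightarrow> nat set \<Rightarrow> (nat \<Rightarrow> int) \<Rightarrow> bool" where
  "primitive_relation n v I h \<longleftrightarrow> h \<in> lattice_L n v \<and> {j. h j \<noteq> 0} = I \<and> Gcd (h ` I) = 1"

definition Iplus :: "(nat \<Rightarrow> int) \<Rightarrow> nat set" where
  "Iplus h = {j. h j > 0}"

definition Iminus :: "(nat \<Rightarrow> int) \<Rightarrow> nat set" where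
  "Iminus h = {j. h j < 0}"

definition separating :: "nat \<Rightarrow> nat set \<Rightarrow> (nat \<Rightarrow> int) \<Rightarrow> nat set set \<Rightarrow> nat set \<Rightarrow> bool" where
  "separating n I h Tp F \<longleftrightarrow> F \<subseteq> {..<n} - I \<and> (\<forall>i\<in>Iplus h. F \<union> (I - {i}) \<in> Tp)"

definition ess_cones_plus :: "nat \<Rightarrow> nat set \<Rightarrow> (nat \<Rightarrow> int) \<Rightarrow> nat set set \<Rightarrow> nat set set" where
  "ess_cones_plus n I h Tp = {F \<union> (I - {i}) | F i. separating n I h Tp F \<and> i \<in> Iplus h}"

definition ess_cones_minus :: "nat \<Rightarrow> nat set \<Rightarrow> (nat \<Rightarrow> int) \<Rightarrow> nat set set \<Rightarrow> nat set set" where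
  "ess_cones_minus n I h Tp = {F \<union> (I - {i}) | F i. separating n I h Tp F \<and> i \<in> Iminus h}"

definition Supp :: "nat \<Rightarrow> (nat \<Rightarrow> rat) \<Rightarrow> (nat \<Rightarrow> int) \<Rightarrow> nat set" where
  "Supp n \<gamma> l = {j. j < n \<and> of_int (l j) + \<gamma> j \<notin> \<nat>}"

definition S_es :: "nat \<Rightarrow> (nat \<Rightarrow> int^'d) \<Rightarrow> nat set set \<Rightarrow> (nat \<Rightarrow> rat) \<Rightarrow> (nat \<Rightarrow> int) set" where
  "S_es n v C \<gamma> = {l \<in> lattice_L n v. \<exists>c\<in>C. Supp n \<gamma> l \<subseteq> c}"

definition m_plus :: "(nat \<Rightarrow> int) \<Rightarrow> (nat \<Rightarrow> rat) \<Rightarrow> (nat \<Rightarrow> int) \<Rightarrow> int" where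
  "m_plus h \<gamma> l = (LEAST m::int. \<exists>j\<in>Iplus h. of_int (m * h j + l j) + \<gamma> j \<in> \<nat>)"

definition m_minus :: "(nat \<Rightarrow> int) \<Rightarrow> (nat \<Rightarrow> rat) \<Rightarrow> (nat \<Rightarrow> int) \<Rightarrow> int" where
  "m_minus h \<gamma> l = (GREATEST m::int. \<exists>j\<in>Iminus h. of_int (m * h j + l j) + \<gamma> j \<in> \<nat>)"

definition in_Box :: "nat \<Rightarrow> (nat \<Rightarrow> int^'d) \<Rightarrow> nat set set \<Rightarrow> int^'d \<Rightarrow> (nat \<Rightarrow> real) \<Rightarrow> bool" where
  "in_Box n v Tp vb q \<longleftrightarrow>
     (\<forall>k. real_of_int (vb $ k) = (\<Sum>j<n. q j * real_of_int (v j $ k)))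
     \<and> (\<forall>j. 0 \<le> q j \<and> q j < 1)
     \<and> (\<exists>\<sigma>\<in>Tp. \<forall>j. q j \<noteq> 0 \<longrightarrow> j \<in> \<sigma>)"

definition yv :: "(nat \<Rightarrow> real) \<Rightarrow> nat \<Rightarrow> complex" where
  "yv q j = exp (2 * of_real pi * \<i> * of_real (q j))"

definition Iset :: "(nat \<Rightarrow> int) \<Rightarrow> (nat \<Rightarrow> complex) \<Rightarrow> complex set" where
  "Iset h r = {t. t \<noteq> 0 \<and> (\<exists>j\<in>Iminus h. r j * t powi h j = 1)}"

end

theory Submission
  imports Defs
begin

(* Shifting l by multiples of h changes only the coordinates in the circuit I, and an essential
   cone F \<union> (I - {i}) omits exactly one circuit index i.  So m h + l lies in S^es_+ iff the part
   of Supp l off the circuit fits into a separating F, which does not depend on m and is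
   guaranteed by the hypothesis on p(l), and some i \<in> I_+ has m h_i + l_i + \<gamma>_i \<in> Z_{\<ge>0}.
   As h_i > 0 on I_+, the set of these m is closed upwards and bounded below, hence equals
   {m_+ ..}; symmetrically (h_i < 0 on I_-) the set for S^es_- is {.. m_-,t}. *)

lemma Nats_add_of_int_nonneg:
  fixes x :: "'a::ring_1"
  assumes "x \<in> \<nat>" and "0 \<le> z"
  shows "x + of_int z \<in> \<nat>"
proof -
  obtain k where "x = of_nat k" using assms(1) Nats_cases by blast
  then have "x + of_int z = of_nat (k + nat z)" using assms(2) by simp
  then show ?thesis by (simp only: of_nat_in_Nats)
qed

lemma int_set_has_least:
  fixes S :: "int set"
  assumes "x \<in> S" and "bdd_below S"
  shows "\<exists>m0\<in>S. \<forall>m\<in>S. m0 \<le> m"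
proof -
  obtain b where b: "\<And>m. m \<in> S \<Longrightarrow> b \<le> m" using assms(2) by (auto simp: bdd_below_def)
  let ?m0 = "Min (S \<inter> {b..x})"
  have fin: "finite (S \<inter> {b..x})" and ne: "S \<inter> {b..x} \<noteq> {}" using assms(1) b by auto
  have "?m0 \<le> m" if "m \<in> S" for m
  proof (cases "m \<le> x")
    case True
    then show ?thesis using that b fin by (intro Min_le) auto
  next
    case False
    have "?m0 \<le> x" using assms(1) b fin by (intro Min_le) auto
    then show ?thesis using False by linarith
  qed
  moreover have "?m0 \<in> S" using Min_in[OF fin ne] by blast
  ultimately show ?thesis by blast
qed

lemma int_set_has_greatest:
  fixes S :: "int set"
  assumes "x \<in> S" and "bdd_above S"
  shows "\<exists>m0\<in>S. \<forall>m\<in>S. m \<le> m0"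
proof -
  obtain b where b: "\<And>m. m \<in> S \<Longrightarrow> m \<le> b" using assms(2) by (auto simp: bdd_above_def)
  let ?m0 = "Max (S \<inter> {x..b})"
  have fin: "finite (S \<inter> {x..b})" and ne: "S \<inter> {x..b} \<noteq> {}" using assms(1) b by auto
  have "m \<le> ?m0" if "m \<in> S" for m
  proof (cases "x \<le> m")
    case True
    then show ?thesis using that b fin by (intro Max_ge) auto
  next
    case False
    have "x \<le> ?m0" using assms(1) b fin by (intro Max_ge) auto
    then show ?thesis using False by linarith
  qed
  moreover have "?m0 \<in> S" using Max_in[OF fin ne] by blast
  ultimately show ?thesis by blast
qed

lemma Least_le_iff_upward_closed:
  fixes S :: "int set"
  assumes "x \<in> S" and "bdd_below S" and up: "\<And>m k. m \<in> S \<Longrightarrow> m \<le> k \<Longrightarrow> k \<in> S"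
  shows "m \<in> S \<longleftrightarrow> (LEAST m. m \<in> S) \<le> m"
proof -
  obtain m0 where m0: "m0 \<in> S" "\<And>m. m \<in> S \<Longrightarrow> m0 \<le> m"
    using int_set_has_least[OF assms(1,2)] by blast
  have "(LEAST m. m \<in> S) = m0" using m0 by (intro Least_equality)
  moreover have "m \<in> S \<longleftrightarrow> m0 \<le> m" using m0 up by blast
  ultimately show ?thesis by simp
qed

lemma le_Greatest_iff_downward_closed:
  fixes S :: "int set"
  assumes "x \<in> S" and "bdd_above S" and down: "\<And>m k. m \<in> S \<Longrightarrow> k \<le> m \<Longrightarrow> k \<in> S"
  shows "m \<in> S \<longleftrightarrow> m \<le> (GREATEST m. m \<in> S)"
proof -
  obtain m0 where m0: "m0 \<in> S" "\<And>m. m \<in> S \<Longrightarrow> m \<le> m0"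
    using int_set_has_greatest[OF assms(1,2)] by blast
  have "(GREATEST m. m \<in> S) = m0" using m0 by (intro Greatest_equality)
  moreover have "m \<in> S \<longleftrightarrow> m \<le> m0" using m0 down by blast
  ultimately show ?thesis by simp
qed

lemma bdd_below_Nats_affine:
  fixes g :: "'a::floor_ceiling" and a c :: int
  assumes "0 < c"
  shows "bdd_below {m. of_int (m * c + a) + g \<in> \<nat>}"
proof (rule bdd_belowI)
  fix m assume "m \<in> {m. of_int (m * c + a) + g \<in> \<nat>}"
  then have "0 \<le> of_int (m * c + a) + g" by (metis mem_Collect_eq Nats_cases of_nat_0_le_iff)
  then have "\<lceil>- g\<rceil> \<le> m * c + a" unfolding ceiling_le_iff by linarith
  moreover have "m * c \<le> m" if "m < 0" using that assms by (simp add: mult_le_cancel_left1)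
  ultimately show "min 0 (\<lceil>- g\<rceil> - a) \<le> m" by linarith
qed

lemma bdd_above_Nats_affine:
  fixes g :: "'a::floor_ceiling" and a c :: int
  assumes "c < 0"
  shows "bdd_above {m. of_int (m * c + a) + g \<in> \<nat>}"
proof -
  have "{m. of_int (m * c + a) + g \<in> \<nat>} = uminus ` {m. of_int (m * (- c) + a) + g \<in> \<nat>}"
  proof (intro set_eqI iffI)
    fix m assume "m \<in> {m. of_int (m * c + a) + g \<in> \<nat>}"
    then show "m \<in> uminus ` {m. of_int (m * (- c) + a) + g \<in> \<nat>}"
      by (intro image_eqI[where x = "- m"]) (auto simp: ac_simps)
  qed (auto simp: ac_simps)
  then show ?thesis using bdd_below_Nats_affine[of "- c" a g] assms by simp
qed

lemma m_plus_le_iff: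
  assumes "finite (Iplus h)" and "\<exists>m. \<exists>j\<in>Iplus h. of_int (m * h j + l j) + g j \<in> \<nat>"
  shows "(\<exists>j\<in>Iplus h. of_int (m * h j + l j) + g j \<in> \<nat>) \<longleftrightarrow> m_plus h g l \<le> m"
proof -
  let ?S = "\<Union>j\<in>Iplus h. {m. of_int (m * h j + l j) + g j \<in> \<nat>}"
  have "bdd_below {m. of_int (m * h j + l j) + g j \<in> \<nat>}" if "j \<in> Iplus h" for j
    using that by (intro bdd_below_Nats_affine) (simp add: Iplus_def)
  then have "bdd_below ?S" using assms(1) by simp
  moreover have "k \<in> ?S" if "m \<in> ?S" "m \<le> k" for m k
  proof -
    obtain j where j: "j \<in> Iplus h" "of_int (m * h j + l j) + g j \<in> \<nat>" using \<open>m \<in> ?S\<close> by blast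
    have "0 \<le> (k - m) * h j" using j(1) \<open>m \<le> k\<close> by (simp add: Iplus_def)
    from Nats_add_of_int_nonneg[OF j(2) this]
    have "of_int (k * h j + l j) + g j \<in> \<nat>" by (simp add: algebra_simps)
    then show ?thesis using j(1) by blast
  qed
  moreover obtain m0 where "m0 \<in> ?S" using assms(2) by blast
  ultimately show ?thesis
    using Least_le_iff_upward_closed[of m0 ?S m] by (simp add: m_plus_def)
qed

lemma le_m_minus_iff:
  assumes "finite (Iminus h)" and "\<exists>m. \<exists>j\<in>Iminus h. of_int (m * h j + l j) + g j \<in> \<nat>"
  shows "(\<exists>j\<in>Iminus h. of_int (m * h j + l j) + g j \<in> \<nat>) \<longleftrightarrow> m \<le> m_minus h g l"
proof -
  let ?S = "\<Union>j\<in>Iminus h. {m. of_int (m * h j + l j) + g j \<in> \<nat>}"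
  have "bdd_above {m. of_int (m * h j + l j) + g j \<in> \<nat>}" if "j \<in> Iminus h" for j
    using that by (intro bdd_above_Nats_affine) (simp add: Iminus_def)
  then have "bdd_above ?S" using assms(1) by simp
  moreover have "k \<in> ?S" if "m \<in> ?S" "k \<le> m" for m k
  proof -
    obtain j where j: "j \<in> Iminus h" "of_int (m * h j + l j) + g j \<in> \<nat>" using \<open>m \<in> ?S\<close> by blast
    have "0 \<le> (k - m) * h j" using j(1) \<open>k \<le> m\<close> by (simp add: Iminus_def mult_nonpos_nonpos)
    from Nats_add_of_int_nonneg[OF j(2) this]
    have "of_int (k * h j + l j) + g j \<in> \<nat>" by (simp add: algebra_simps)
    then show ?thesis using j(1) by blast
  qed
  moreover obtain m0 where "m0 \<in> ?S" using assms(2) by blast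
  ultimately show ?thesis
    using le_Greatest_iff_downward_closed[of m0 ?S m] by (simp add: m_minus_def)
qed

lemma lattice_L_add_mult:
  assumes "h \<in> lattice_L n v" and "l \<in> lattice_L n v"
  shows "(\<lambda>j. m * h j + l j) \<in> lattice_L n v"
proof -
  have "(\<Sum>j<n. (m * h j + l j) * v j $ k) = m * (\<Sum>j<n. h j * v j $ k) + (\<Sum>j<n. l j * v j $ k)" for k
    by (simp add: distrib_right sum.distrib sum_distrib_left mult.assoc)
  then show ?thesis using assms unfolding lattice_L_def by simp
qed

lemma S_es_separating_cones_iff:
  assumes "h \<in> lattice_L n v" and "l \<in> lattice_L n v" and hI: "{j. h j \<noteq> 0} = I"
    and KI: "K \<subseteq> I"
  shows "(\<lambda>j. m * h j + l j) \<in> S_es n v {F \<union> (I - {i}) | F i. separating n I h Tp F \<and> i \<in> K} g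
     \<longleftrightarrow> (\<exists>F. separating n I h Tp F \<and> Supp n g l - I \<subseteq> F)
       \<and> (\<exists>i\<in>K. of_int (m * h i + l i) + g i \<in> \<nat>)"
    (is "?l \<in> _ \<longleftrightarrow> _")
proof -
  have I_below_n: "I \<subseteq> {..<n}"
    using assms(1) hI by (auto simp: lattice_L_def not_less[symmetric])
  have off_circuit: "Supp n g ?l - I = Supp n g l - I"
    using hI by (auto simp: Supp_def)
  have on_circuit: "i \<notin> Supp n g ?l \<longleftrightarrow> of_int (m * h i + l i) + g i \<in> \<nat>" if "i \<in> K" for i
    using that KI I_below_n by (auto simp: Supp_def)
  have disjoint: "F \<inter> I = {}" if "separating n I h Tp F" for F
    using that by (auto simp: separating_def)
  have fits: "Supp n g ?l \<subseteq> F \<union> (I - {i})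
      \<longleftrightarrow> Supp n g l - I \<subseteq> F \<and> of_int (m * h i + l i) + g i \<in> \<nat>"
    if "separating n I h Tp F" and "i \<in> K" for F i
    using off_circuit disjoint[OF that(1)] on_circuit[OF that(2)] that(2) KI by blast
  have "(\<exists>c \<in> {F \<union> (I - {i}) | F i. separating n I h Tp F \<and> i \<in> K}. Supp n g ?l \<subseteq> c)
      \<longleftrightarrow> (\<exists>F i. separating n I h Tp F \<and> i \<in> K \<and> Supp n g ?l \<subseteq> F \<union> (I - {i}))"
    by blast
  also have "\<dots> \<longleftrightarrow> (\<exists>F. separating n I h Tp F \<and> Supp n g l - I \<subseteq> F)
      \<and> (\<exists>i\<in>K. of_int (m * h i + l i) + g i \<in> \<nat>)"
    using fits by meson
  finally show ?thesis
    using lattice_L_add_mult[OF assms(1,2)] by (simp add: S_es_def)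
qed

lemma shift_in_S_es_plus_iff:
  assumes hL: "h \<in> lattice_L n v" and lL: "l \<in> lattice_L n v" and hI: "{j. h j \<noteq> 0} = I"
    and "\<exists>m. (\<lambda>j. m * h j + l j) \<in> S_es n v (ess_cones_plus n I h Tp) g"
  shows "(\<lambda>j. m * h j + l j) \<in> S_es n v (ess_cones_plus n I h Tp) g \<longleftrightarrow> m_plus h g l \<le> m"
proof -
  have "Iplus h \<subseteq> I" using hI by (auto simp: Iplus_def)
  then have iff: "(\<lambda>j. m * h j + l j) \<in> S_es n v (ess_cones_plus n I h Tp) g
      \<longleftrightarrow> (\<exists>F. separating n I h Tp F \<and> Supp n g l - I \<subseteq> F)
        \<and> (\<exists>i\<in>Iplus h. of_int (m * h i + l i) + g i \<in> \<nat>)" for m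
    unfolding ess_cones_plus_def by (rule S_es_separating_cones_iff[OF hL lL hI])
  have "Iplus h \<subseteq> {..<n}"
    using hL by (auto simp: Iplus_def lattice_L_def not_less[symmetric])
  then have fin: "finite (Iplus h)" by (rule finite_subset) simp
  obtain m0 where "(\<lambda>j. m0 * h j + l j) \<in> S_es n v (ess_cones_plus n I h Tp) g"
    using assms(4) by blast
  then have off: "\<exists>F. separating n I h Tp F \<and> Supp n g l - I \<subseteq> F"
    and ex: "\<exists>m. \<exists>i\<in>Iplus h. of_int (m * h i + l i) + g i \<in> \<nat>"
    unfolding iff by auto
  show ?thesis
    unfolding iff m_plus_le_iff[OF fin ex, symmetric] using off by simp
qed

lemma shift_in_S_es_minus_iff:
  assumes hL: "h \<in> lattice_L n v" and lL: "l \<in> lattice_L n v" and hI: "{j. h j \<noteq> 0} = I"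
    and "\<exists>m. (\<lambda>j. m * h j + l j) \<in> S_es n v (ess_cones_minus n I h Tp) g"
  shows "(\<lambda>j. m * h j + l j) \<in> S_es n v (ess_cones_minus n I h Tp) g \<longleftrightarrow> m \<le> m_minus h g l"
proof -
  have "Iminus h \<subseteq> I" using hI by (auto simp: Iminus_def)
  then have iff: "(\<lambda>j. m * h j + l j) \<in> S_es n v (ess_cones_minus n I h Tp) g
      \<longleftrightarrow> (\<exists>F. separating n I h Tp F \<and> Supp n g l - I \<subseteq> F)
        \<and> (\<exists>i\<in>Iminus h. of_int (m * h i + l i) + g i \<in> \<nat>)" for m
    unfolding ess_cones_minus_def by (rule S_es_separating_cones_iff[OF hL lL hI])
  have "Iminus h \<subseteq> {..<n}"
    using hL by (auto simp: Iminus_def lattice_L_def not_less[symmetric])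
  then have fin: "finite (Iminus h)" by (rule finite_subset) simp
  obtain m0 where "(\<lambda>j. m0 * h j + l j) \<in> S_es n v (ess_cones_minus n I h Tp) g"
    using assms(4) by blast
  then have off: "\<exists>F. separating n I h Tp F \<and> Supp n g l - I \<subseteq> F"
    and ex: "\<exists>m. \<exists>i\<in>Iminus h. of_int (m * h i + l i) + g i \<in> \<nat>"
    unfolding iff by auto
  show ?thesis
    unfolding iff le_m_minus_iff[OF fin ex, symmetric] using off by simp
qed

theorem proposition4p7:
  fixes n :: nat and v :: "nat \<Rightarrow> int^'d" and Tp Tm :: "nat set set"
    and I :: "nat set" and h :: "nat \<Rightarrow> int" and \<beta> vb :: "int^'d"
    and q :: "nat \<Rightarrow> real" and \<gamma> :: "nat \<Rightarrow> rat" and t :: complex and \<theta> :: rat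
    and l :: "nat \<Rightarrow> int"
  assumes inj: "inj_on v {..<n}"
    and gen: "\<forall>x::int^'d. \<exists>c::nat \<Rightarrow> int. \<forall>k. x $ k = (\<Sum>j<n. c j * v j $ k)"
    and height: "\<exists>w::int^'d. \<forall>j<n. (\<Sum>k\<in>UNIV. w $ k * v j $ k) = 1"
    and regp: "regular_triangulation n v Tp"
    and regm: "regular_triangulation n v Tm"
    and neq: "Tp \<noteq> Tm"
    and circ: "circuit n v I"
    and prim: "primitive_relation n v I h"
    and flip: "Tm = (Tp - ess_cones_plus n I h Tp) \<union> ess_cones_minus n I h Tp"
    and box: "in_Box n v Tp vb q"
    and gam1: "\<forall>j<n. exp (2 * of_real pi * \<i> * of_real (of_rat (\<gamma> j))) = yv q j"
    and gam2: "\<forall>k. of_int (\<beta> $ k) = (\<Sum>j<n. \<gamma> j * of_int (v j $ k))"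
    and tI: "t \<in> Iset h (yv q)"
    and th1: "exp (2 * of_real pi * \<i> * of_real (of_rat \<theta>)) = t"
    and th2: "t = 1 \<longrightarrow> \<theta> = 0"
    and lL: "l \<in> lattice_L n v"
    and pl_plus: "\<exists>m::int. (\<lambda>j. m * h j + l j) \<in> S_es n v (ess_cones_plus n I h Tp) \<gamma>"
    and pl_minus: "\<exists>m::int. (\<lambda>j. m * h j + l j)
                     \<in> S_es n v (ess_cones_minus n I h Tp) (\<lambda>j. \<gamma> j + \<theta> * of_int (h j))"
  shows "\<forall>m::int.
     ((\<lambda>j. m * h j + l j) \<in> S_es n v (ess_cones_plus n I h Tp) \<gamma> \<longleftrightarrow> m \<ge> m_plus h \<gamma> l)
   \<and> ((\<lambda>j. m * h j + l j) \<in> S_es n v (ess_cones_minus n I h Tp) (\<lambda>j. \<gamma> j + \<theta> * of_int (h j))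
        \<longleftrightarrow> m \<le> m_minus h (\<lambda>j. \<gamma> j + \<theta> * of_int (h j)) l)"
proof (intro allI conjI)
  \<comment> \<open>The fans, the box element and t enter only through the hypotheses on p(l).\<close>
  have hL: "h \<in> lattice_L n v" and hI: "{j. h j \<noteq> 0} = I"
    using prim by (auto simp: primitive_relation_def)
  fix m
  show "(\<lambda>j. m * h j + l j) \<in> S_es n v (ess_cones_plus n I h Tp) \<gamma> \<longleftrightarrow> m_plus h \<gamma> l \<le> m"
    by (rule shift_in_S_es_plus_iff[OF hL lL hI pl_plus])
  show "(\<lambda>j. m * h j + l j) \<in> S_es n v (ess_cones_minus n I h Tp) (\<lambda>j. \<gamma> j + \<theta> * of_int (h j))
      \<longleftrightarrow> m \<le> m_minus h (\<lambda>j. \<gamma> j + \<theta> * of_int (h j)) l"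
    by (rule shift_in_S_es_minus_iff[OF hL lL hI pl_minus])
qed

end
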